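(* Let $R$ be a $*$-reducing ring, let $p,q\in R$ be projections, and put $\overline{p}=1-p$, $\overline{q}=1-q$. Then the following are equivalent: (1) $p+q-pq$ is MP invertible; (2) $p+\overline{p}q\overline{p}$ is MP invertible; (3) $\overline{p}q\overline{p}$ is MP invertible; (4) $q-pq$ is MP invertible; (5) $q-qp$ is MP invertible; (6) $p+q-qp$ is MP invertible; (7) $q+\overline{q}p\overline{q}$ is MP invertible; (8) $\overline{q}p\overline{q}$ is MP invertible; (9) $p-qp$ is MP invertible; (10) $p-pq$ is MP invertible.
   Context: $R$ is an associative ring with identity $1$ and an involution $a\mapsto a^*$ (satisfying $(a^* )^*=a$, $(a+b)^*=a^*+b^*$, $(ab)^*=b^*a^*$). $R$ is $*$-reducing if $a^*a=0$ implies $a=0$ for all $a\in R$. An element $a$ is MP invertible if there is $b$ with $aba=a$, $bab=b$, $(ab)^*=ab$, $(ba)^*=ba$; this $b$ is unique and written $a^{\dagger}$. A projection is an element $p$ with $p^2=p=p^*$. *)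

theory Defs
  imports Main
begin

definition is_involution :: "('a::ring_1 \<Rightarrow> 'a) \<Rightarrow> bool" where
  "is_involution s \<longleftrightarrow> (\<forall>a. s (s a) = a) \<and> (\<forall>a b. s (a + b) = s a + s b)
     \<and> (\<forall>a b. s (a * b) = s b * s a)"

definition star_reducing :: "('a::ring_1 \<Rightarrow> 'a) \<Rightarrow> bool" where
  "star_reducing s \<longleftrightarrow> (\<forall>a. s a * a = 0 \<longrightarrow> a = 0)"

definition MP_inverse :: "('a::ring_1 \<Rightarrow> 'a) \<Rightarrow> 'a \<Rightarrow> 'a \<Rightarrow> bool" where
  "MP_inverse s a b \<longleftrightarrow> a * b * a = a \<and> b * a * b = b \<and> s (a * b) = a * b \<and> s (b * a) = b * a"

definition MP_invertible :: "('a::ring_1 \<Rightarrow> 'a) \<Rightarrow> 'a \<Rightarrow> bool" where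
  "MP_invertible s a \<longleftrightarrow> (\<exists>b. MP_inverse s a b)"

definition projection :: "('a::ring_1 \<Rightarrow> 'a) \<Rightarrow> 'a \<Rightarrow> bool" where
  "projection s p \<longleftrightarrow> p * p = p \<and> s p = p"

end

theory Submission
  imports Defs
begin

text \<open>
  Write \<open>p' = 1 - p\<close>. In the Peirce decomposition with respect to \<open>p\<close> the element
  \<open>p + q - pq = p + g + u\<close> is lower triangular, with diagonal \<open>p\<close> and \<open>u = p'qp'\<close> and
  off-diagonal part \<open>g = p'qp\<close>. If \<open>u\<close> has an MP inverse \<open>w\<close>, the identity
  \<open>g g\<^sup>* = u - u\<^sup>2\<close> and \<open>*\<close>-reducedness put \<open>g\<close> into the range of \<open>u\<close>, and then
  \<open>p - wg + w\<close> is an MP inverse of \<open>p + g + u\<close>. Conversely, \<open>*\<close>-reducedness shows that the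
  range of an MP-invertible \<open>p + q - pq\<close> contains \<open>p\<close>, and cutting the inverse down to
  the corner gives an MP inverse of \<open>u\<close>. The remaining equivalences come from
  \<open>(q - pq)(q - pq)\<^sup>* = u\<close>, from the invariance of MP invertibility under \<open>a \<mapsto> a\<^sup>*\<close>
  and \<open>a \<mapsto> a a\<^sup>*\<close>, from adding the orthogonal projection \<open>p\<close>, and from exchanging
  \<open>p\<close> and \<open>q\<close>.
\<close>

lemma mult_assoc_extend: "(a::'a::semigroup_mult) * b = c \<Longrightarrow> a * (b * t) = c * t"
  by (simp add: mult.assoc[symmetric])

locale ring_with_involution =
  fixes s :: "'a::ring_1 \<Rightarrow> 'a"
  assumes involution: "is_involution s"
begin

lemma star_star [simp]: "s (s a) = a"
  and star_add [simp]: "s (a + b) = s a + s b"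
  and star_mult [simp]: "s (a * b) = s b * s a"
  using involution unfolding is_involution_def by blast+

lemma star_zero [simp]: "s 0 = 0"
  using star_add[of 0 0] by simp

lemma star_uminus [simp]: "s (- a) = - s a"
  using star_add[of a "- a"] by (simp add: minus_unique)

lemma star_diff [simp]: "s (a - b) = s a - s b"
  by (simp only: diff_conv_add_uminus star_add star_uminus)

lemma star_one [simp]: "s 1 = 1"
  using star_mult[of "s 1" 1] by simp

lemma MP_inverse_unique:
  assumes b: "MP_inverse s a b" and c: "MP_inverse s a c"
  shows "b = c"
proof -
  have ab: "a * b = s b * s a" and ba: "b * a = s a * s b"
    and ac: "a * c = s c * s a" and ca: "c * a = s a * s c"
    and aba: "a * b * a = a" and bab: "b * a * b = b"
    and aca: "a * c * a = a" and cac: "c * a * c = c"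
    using b c unfolding MP_inverse_def by (metis star_mult)+
  have "b = b * (s b * s a)"
    using ab bab by (simp add: mult.assoc)
  also have "\<dots> = b * (s b * s a) * (s c * s a)"
    using arg_cong[OF aca, of s] by (simp add: mult.assoc)
  also have "\<dots> = b * a * c"
    using ab ac bab by (simp add: mult.assoc)
  also have "\<dots> = (s a * s b) * (s a * s c) * c"
    using ba ca cac by (metis mult.assoc)
  also have "\<dots> = s a * s c * c"
    using arg_cong[OF aba, of s] by (simp add: mult.assoc[symmetric])
  also have "\<dots> = c"
    using ca cac by simp
  finally show ?thesis .
qed

lemma MP_inverse_star: "MP_inverse s a b \<Longrightarrow> MP_inverse s (s a) (s b)"
  unfolding MP_inverse_def by (metis star_mult star_star mult.assoc)

lemma MP_invertible_star_iff: "MP_invertible s (s a) \<longleftrightarrow> MP_invertible s a"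
  unfolding MP_invertible_def by (metis MP_inverse_star star_star)

lemma MP_inverse_hermitian: "s a = a \<Longrightarrow> MP_inverse s a b \<Longrightarrow> s b = b"
  using MP_inverse_star MP_inverse_unique by metis

lemma MP_inverse_mult_star:
  assumes "MP_inverse s a b"
  shows "MP_inverse s (a * s a) (s b * b)"
proof -
  have aba: "a * (b * a) = a" and bab: "b * (a * b) = b"
    and ab: "s b * s a = a * b" and ba: "s a * s b = b * a"
    using assms unfolding MP_inverse_def by (auto simp: mult.assoc)
  have bx: "b * (a * s a) = s a"
    using arg_cong[OF aba, of s] ba by (simp add: mult.assoc[symmetric])
  have ax: "a * (b * s b) = s b"
    using arg_cong[OF bab, of s] ab by (simp add: mult.assoc[symmetric])
  note rules = aba bab ab ba bx ax
  note rules' = rules[THEN mult_assoc_extend, simplified mult.assoc]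
  show ?thesis
    unfolding MP_inverse_def by (simp add: mult.assoc rules rules')
qed

lemma MP_inverse_mult_zero_right:
  assumes "MP_inverse s u w" "s p = p" "p * u = 0"
  shows "w * p = 0"
proof -
  have "w * p = w * s (u * w) * p"
    using assms(1) unfolding MP_inverse_def by (simp add: mult.assoc)
  also have "\<dots> = w * s w * s (p * u)"
    using assms(2) by (simp add: mult.assoc)
  finally show ?thesis
    using assms(3) by simp
qed

lemma MP_inverse_mult_zero_left:
  assumes "MP_inverse s u w" "s p = p" "u * p = 0"
  shows "p * w = 0"
proof -
  have "p * w = p * s (w * u) * w"
    using assms(1) unfolding MP_inverse_def by (simp add: mult.assoc)
  also have "\<dots> = s (u * p) * s w * w"
    using assms(2) by (simp add: mult.assoc)
  finally show ?thesis
    using assms(3) by simp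
qed

lemma MP_inverse_corner:
  assumes inv: "MP_inverse s y Y" and p: "projection s p"
    and py: "p * y = p" and yYp: "y * (Y * p) = p"
  shows "MP_inverse s (y - y * p) (Y - Y * p)"
proof -
  have pp: "p * p = p" and sp: "s p = p"
    using p unfolding projection_def by auto
  have yYy: "y * (Y * y) = y" and YyY: "Y * (y * Y) = Y"
    and yY: "s (y * Y) = y * Y" and Yy: "s (Y * y) = Y * y"
    using inv unfolding MP_inverse_def by (auto simp: mult.assoc)
  have "p * (y * Y) = p"
    using arg_cong[OF yYp, of s] yY sp by (simp add: mult.assoc)
  then have pY: "p * Y = p"
    using py by (simp add: mult.assoc[symmetric])
  have Yyp: "Y * (y * p) = p"
    using arg_cong[OF pY, of s] arg_cong[OF py, of s] Yy sp by (metis star_mult mult.assoc)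
  note rules = pp py pY yYp Yyp yYy YyY
  note rules' = rules[THEN mult_assoc_extend, simplified mult.assoc]
  have uw: "(y - y * p) * (Y - Y * p) = y * Y - p"
    by (simp add: algebra_simps rules rules')
  have wu: "(Y - Y * p) * (y - y * p) = Y * y - p"
    by (simp add: algebra_simps rules rules')
  show ?thesis
    unfolding MP_inverse_def uw wu using yY Yy sp
    by (simp add: algebra_simps rules rules')
qed

text \<open>In the Peirce decomposition with respect to \<open>p\<close>, \<open>p + g + u\<close> is the lower triangular
  matrix with diagonal \<open>(1, u)\<close> and off-diagonal entry \<open>g\<close>.\<close>
lemma MP_inverse_triangular:
  assumes p: "projection s p"
    and pg: "p * g = 0" and gp: "g * p = g"
    and pu: "p * u = 0" and up: "u * p = 0" and gu: "g * u = 0"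
    and inv: "MP_inverse s u w" and uwg: "u * (w * g) = g"
  shows "MP_inverse s (p + g + u) (p - w * g + w)"
proof -
  have pp: "p * p = p" and sp: "s p = p"
    using p unfolding projection_def by auto
  have uwu: "u * (w * u) = u" and wuw: "w * (u * w) = w"
    and uw: "s (u * w) = u * w" and wu: "s (w * u) = w * u"
    using inv unfolding MP_inverse_def by (auto simp: mult.assoc)
  have wp: "w * p = 0" and pw: "p * w = 0"
    using MP_inverse_mult_zero_right MP_inverse_mult_zero_left inv sp pu up by auto
  have gw: "g * w = 0"
    using gp pw by (metis mult.assoc mult_zero_right)
  have gg: "g * g = 0"
    using gp pg by (metis mult.assoc mult_zero_right)
  note rules = pp pg gp pu up gu wp pw gw gg uwg uwu wuw
  note rules' = rules[THEN mult_assoc_extend, simplified mult.assoc]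
  have yY: "(p + g + u) * (p - w * g + w) = p + u * w"
    by (simp add: algebra_simps rules rules')
  have Yy: "(p - w * g + w) * (p + g + u) = p + w * u"
    by (simp add: algebra_simps rules rules')
  show ?thesis
    unfolding MP_inverse_def yY Yy using uw wu sp
    by (simp add: algebra_simps rules rules')
qed

lemma MP_invertible_add_orthogonal_projection_iff:
  assumes p: "projection s p" and pu: "p * u = 0" and up: "u * p = 0"
  shows "MP_invertible s (p + u) \<longleftrightarrow> MP_invertible s u"
proof
  have pp: "p * p = p"
    using p unfolding projection_def by auto
  assume "MP_invertible s (p + u)"
  then obtain Y where Y: "MP_inverse s (p + u) Y"
    unfolding MP_invertible_def by blast
  have "(p + u) * p = p"
    using pp up by (simp add: algebra_simps)
  then have "(p + u) * (Y * p) = p"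
    using Y unfolding MP_inverse_def by (metis mult.assoc)
  then have "MP_inverse s (p + u - (p + u) * p) (Y - Y * p)"
    using MP_inverse_corner[OF Y p] pp pu by (simp add: algebra_simps)
  then show "MP_invertible s u"
    using pp up unfolding MP_invertible_def by (auto simp: algebra_simps)
next
  assume "MP_invertible s u"
  then obtain w where "MP_inverse s u w"
    unfolding MP_invertible_def by blast
  then have "MP_inverse s (p + 0 + u) (p - w * 0 + w)"
    by (intro MP_inverse_triangular[OF p _ _ pu up]) simp_all
  then show "MP_invertible s (p + u)"
    unfolding MP_invertible_def by auto
qed

end

locale star_reducing_ring = ring_with_involution +
  assumes reducing: "star_reducing s"
begin

lemma mult_star_eq_zero: "a * s a = 0 \<Longrightarrow> a = 0"
  using reducing unfolding star_reducing_def by (metis star_star star_zero)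

lemma mult_mult_star_eq_zero: "t * a * s a = 0 \<Longrightarrow> t * a = 0"
proof -
  assume "t * a * s a = 0"
  then have "t * a * s (t * a) = 0"
    by (simp add: mult.assoc[symmetric])
  then show ?thesis
    by (rule mult_star_eq_zero)
qed

lemma MP_inverse_of_mult_star:
  assumes "MP_inverse s (a * s a) c"
  shows "MP_inverse s a (s a * c)"
proof -
  have xcx: "a * s a * c * a * s a = a * s a" and cxc: "c * (a * s a) * c = c"
    and xc: "s (a * s a * c) = a * s a * c"
    using assms unfolding MP_inverse_def by (auto simp: mult.assoc)
  have sc: "s c = c"
    using MP_inverse_hermitian[OF _ assms] by simp
  have "(a * s a * c - 1) * a * s a = 0"
    using xcx by (simp add: algebra_simps)
  then have "(a * s a * c - 1) * a = 0"
    by (rule mult_mult_star_eq_zero)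
  then have key: "a * (s a * (c * a)) = a"
    by (simp add: algebra_simps)
  show ?thesis
    unfolding MP_inverse_def
  proof (intro conjI)
    show "a * (s a * c) * a = a" using key by (simp add: mult.assoc)
    show "s a * c * a * (s a * c) = s a * c" using cxc by (simp add: mult.assoc)
    show "s (a * (s a * c)) = a * (s a * c)" using xc by (simp add: mult.assoc)
    show "s (s a * c * a) = s a * c * a" using sc by (simp add: mult.assoc)
  qed
qed

lemma MP_invertible_mult_star_iff: "MP_invertible s (a * s a) \<longleftrightarrow> MP_invertible s a"
  unfolding MP_invertible_def using MP_inverse_of_mult_star MP_inverse_mult_star by blast

context
  fixes p q :: 'a
  assumes p: "projection s p" and q: "projection s q"
begin

lemma MP_inverse_sum_minus_product_range:
  assumes Y: "MP_inverse s (p + q - p * q) Y"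
  shows "(p + q - p * q) * (Y * p) = p"
proof -
  define y where "y = p + q - p * q"
  define e where "e = 1 - y * Y"
  have pp: "p * p = p" and qq: "q * q = q" and sp: "s p = p" and sq: "s q = q"
    using p q unfolding projection_def by auto
  have ey: "e * y = 0"
    using Y unfolding MP_inverse_def e_def y_def by (simp add: algebra_simps)
  have ep: "e * (q - p * q) = - (e * p)"
    using ey unfolding y_def by (simp add: algebra_simps)
  have "(q - p * q) * s (q - p * q) = (q - p * q) * (1 - p)"
    using sp sq by (simp add: algebra_simps qq qq[THEN mult_assoc_extend])
  then have "e * (q - p * q) * s (q - p * q) = e * (q - p * q) * (1 - p)"
    by (simp only: mult.assoc)
  also have "\<dots> = - (e * p * (1 - p))"
    using ep by simp
  also have "\<dots> = 0"
    by (simp add: algebra_simps pp)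
  finally have "e * p = 0"
    using ep mult_mult_star_eq_zero by fastforce
  then show ?thesis
    unfolding e_def y_def by (simp add: algebra_simps)
qed

lemma corner_inverse_absorbs_off_diagonal:
  assumes w: "MP_inverse s ((1 - p) * q * (1 - p)) w"
  shows "(1 - p) * q * (1 - p) * (w * ((1 - p) * q * p)) = (1 - p) * q * p"
proof -
  define u where "u = (1 - p) * q * (1 - p)"
  define g where "g = (1 - p) * q * p"
  have pp: "p * p = p" and qq: "q * q = q" and sp: "s p = p" and sq: "s q = q"
    using p q unfolding projection_def by auto
  have "g * s g = u - u * u"
    unfolding u_def g_def using sp sq
    by (simp add: algebra_simps pp qq pp[THEN mult_assoc_extend] qq[THEN mult_assoc_extend])
  moreover have "(1 - u * w) * u = 0"
    using w unfolding MP_inverse_def u_def by (simp add: algebra_simps)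
  ultimately have "(1 - u * w) * g * s g = 0"
    by (simp add: mult.assoc right_diff_distrib flip: mult.assoc[of _ u u])
  then have "(1 - u * w) * g = 0"
    by (rule mult_mult_star_eq_zero)
  then show ?thesis
    unfolding u_def g_def by (simp add: algebra_simps)
qed

lemma MP_invertible_sum_minus_product_iff_corner:
  "MP_invertible s (p + q - p * q) \<longleftrightarrow> MP_invertible s ((1 - p) * q * (1 - p))"
proof -
  have pp: "p * p = p" and qq: "q * q = q"
    using p q unfolding projection_def by auto
  note rules = pp qq pp[THEN mult_assoc_extend] qq[THEN mult_assoc_extend]
  define g where "g = (1 - p) * q * p"
  define u where "u = (1 - p) * q * (1 - p)"
  have decomp: "p + q - p * q = p + g + u"
    unfolding g_def u_def by (simp add: algebra_simps rules)
  show ?thesis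
    unfolding u_def[symmetric]
  proof
    assume "MP_invertible s (p + q - p * q)"
    then obtain Y where Y: "MP_inverse s (p + q - p * q) Y"
      unfolding MP_invertible_def by blast
    have "p * (p + q - p * q) = p"
      by (simp add: algebra_simps rules)
    from MP_inverse_corner[OF Y p this MP_inverse_sum_minus_product_range[OF Y]]
    have "MP_inverse s (p + q - p * q - (p + q - p * q) * p) (Y - Y * p)" .
    moreover have "p + q - p * q - (p + q - p * q) * p = u"
      unfolding u_def by (simp add: algebra_simps rules)
    ultimately show "MP_invertible s u"
      unfolding MP_invertible_def by auto
  next
    assume "MP_invertible s u"
    then obtain w where w: "MP_inverse s u w"
      unfolding MP_invertible_def by blast
    have "p * g = 0" "g * p = g" "p * u = 0" "u * p = 0" "g * u = 0"
      unfolding g_def u_def by (simp_all add: algebra_simps rules)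
    moreover have "u * (w * g) = g"
      using corner_inverse_absorbs_off_diagonal w unfolding g_def u_def by blast
    ultimately have "MP_inverse s (p + g + u) (p - w * g + w)"
      using MP_inverse_triangular[OF p _ _ _ _ _ w] by blast
    then show "MP_invertible s (p + q - p * q)"
      unfolding MP_invertible_def decomp by blast
  qed
qed

lemma MP_invertible_corner_iffs:
  shows "MP_invertible s (p + q - p * q) \<longleftrightarrow> MP_invertible s ((1 - p) * q * (1 - p))"
    and "MP_invertible s (p + (1 - p) * q * (1 - p)) \<longleftrightarrow> MP_invertible s ((1 - p) * q * (1 - p))"
    and "MP_invertible s (q - p * q) \<longleftrightarrow> MP_invertible s ((1 - p) * q * (1 - p))"
    and "MP_invertible s (q - q * p) \<longleftrightarrow> MP_invertible s ((1 - p) * q * (1 - p))"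
proof -
  have pp: "p * p = p" and qq: "q * q = q" and sp: "s p = p" and sq: "s q = q"
    using p q unfolding projection_def by auto
  note rules = pp qq pp[THEN mult_assoc_extend] qq[THEN mult_assoc_extend]
  show "MP_invertible s (p + q - p * q) \<longleftrightarrow> MP_invertible s ((1 - p) * q * (1 - p))"
    by (rule MP_invertible_sum_minus_product_iff_corner)
  show "MP_invertible s (p + (1 - p) * q * (1 - p)) \<longleftrightarrow> MP_invertible s ((1 - p) * q * (1 - p))"
    by (rule MP_invertible_add_orthogonal_projection_iff[OF p]) (simp_all add: algebra_simps rules)
  have "(q - p * q) * s (q - p * q) = (1 - p) * q * (1 - p)"
    using sp sq by (simp add: algebra_simps rules)
  then show qpq: "MP_invertible s (q - p * q) \<longleftrightarrow> MP_invertible s ((1 - p) * q * (1 - p))"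
    using MP_invertible_mult_star_iff[of "q - p * q"] by simp
  have "s (q - p * q) = q - q * p"
    using sp sq by simp
  then show "MP_invertible s (q - q * p) \<longleftrightarrow> MP_invertible s ((1 - p) * q * (1 - p))"
    using MP_invertible_star_iff[of "q - p * q"] qpq by simp
qed

end

end

theorem corollary2p6:
  fixes s :: "'a::ring_1 \<Rightarrow> 'a" and p q :: 'a
  assumes "is_involution s" and "star_reducing s"
    and "projection s p" and "projection s q"
  shows "(MP_invertible s (p + q - p * q) \<longleftrightarrow> MP_invertible s (p + (1 - p) * q * (1 - p)))
       \<and> (MP_invertible s (p + q - p * q) \<longleftrightarrow> MP_invertible s ((1 - p) * q * (1 - p)))
       \<and> (MP_invertible s (p + q - p * q) \<longleftrightarrow> MP_invertible s (q - p * q))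
       \<and> (MP_invertible s (p + q - p * q) \<longleftrightarrow> MP_invertible s (q - q * p))
       \<and> (MP_invertible s (p + q - p * q) \<longleftrightarrow> MP_invertible s (p + q - q * p))
       \<and> (MP_invertible s (p + q - p * q) \<longleftrightarrow> MP_invertible s (q + (1 - q) * p * (1 - q)))
       \<and> (MP_invertible s (p + q - p * q) \<longleftrightarrow> MP_invertible s ((1 - q) * p * (1 - q)))
       \<and> (MP_invertible s (p + q - p * q) \<longleftrightarrow> MP_invertible s (p - q * p))
       \<and> (MP_invertible s (p + q - p * q) \<longleftrightarrow> MP_invertible s (p - p * q))"
proof -
  interpret star_reducing_ring s
    using assms(1,2) by unfold_locales
  note pq = MP_invertible_corner_iffs[OF assms(3,4)]
  note qp = MP_invertible_corner_iffs[OF assms(4,3)]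
  have "s (p + q - p * q) = q + p - q * p"
    using assms(3,4) unfolding projection_def by simp
  then have "MP_invertible s (q + p - q * p) \<longleftrightarrow> MP_invertible s (p + q - p * q)"
    using MP_invertible_star_iff by metis
  moreover have "q + p - q * p = p + q - q * p"
    by (simp add: add.commute)
  ultimately show ?thesis
    using pq qp by metis
qed

end
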